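(* Let $x\ge 0$ and $y,z,p>0$ (the approximation is intended for the regime $x\ll y,z,p$). Let $a=(y+z)/2$ and $g=\sqrt{yz}$. Then $$R_J(x,y,z,p)=R_J(0,y,z,p)+\frac{3\sqrt x}{gp}\left(-1+\frac{\pi\theta}{4}\sqrt{\frac xg}\right),$$ where $\frac{\sqrt{g/a}}{1+\sqrt{x/a}}<\theta<\frac ag+\frac gp$.
   Context: For $x,y,z\ge 0$ with at most one zero and $p>0$: $R_J(x,y,z,p)=\frac32\int_0^\infty[(t+x)(t+y)(t+z)]^{-1/2}(t+p)^{-1}\,dt$. *)

theory Defs
  imports "HOL-Analysis.Analysis"
begin

definition carlson_RJ :: "real \<Rightarrow> real \<Rightarrow> real \<Rightarrow> real \<Rightarrow> real" where
  "carlson_RJ x y z p =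
     3 / 2 * integral {0..} (\<lambda>t. 1 / (sqrt ((t + x) * (t + y) * (t + z)) * (t + p)))"

end

theory Submission
  imports Defs "HOL-Real_Asymp.Real_Asymp"
begin

text \<open>
  Put \<open>f(t) = 1/\<surd>t - 1/\<surd>(t+x)\<close>, whose integral over \<open>(0,\<infinity>)\<close> is \<open>2\<surd>x\<close>, and
  \<open>Q(t) = \<surd>((t+y)(t+z))\<close>. The two \<open>R\<^sub>J\<close> integrands differ by \<open>f(t) / (Q(t)(t+p))\<close>, so
  \<open>2\<surd>x + (2/3) g p (R\<^sub>J(x,y,z,p) - R\<^sub>J(0,y,z,p)) = \<integral> f w\<close> with
  \<open>w(t) = 1 - (g/Q(t)) (p/(t+p))\<close>, and \<open>\<theta>\<close> is this integral times \<open>2\<surd>g/(\<pi>x)\<close>.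
  Since \<open>Q(t)\<^sup>2 = t\<^sup>2 + 2at + g\<^sup>2\<close> with \<open>g \<le> a\<close>, comparing \<open>Q(t)\<close> with \<open>t+g\<close> and \<open>t+a\<close> gives
  \<open>t/(t+a) \<le> w(t) \<le> (a/g + g/p) t/(t+g)\<close>. Together with elementary bounds on \<open>f\<close> this
  sandwiches \<open>f w\<close> between integrands of the forms \<open>\<surd>t/((t+B)(t+C))\<close> and \<open>1/(\<surd>t(t+c))\<close>,
  whose integrals are \<open>\<pi>/(\<surd>B+\<surd>C)\<close> and \<open>\<pi>/\<surd>c\<close>.
\<close>

lemma has_integral_Ioi_FTC_nonneg:
  fixes f F :: "real \<Rightarrow> real"
  assumes deriv: "\<And>t. t > a \<Longrightarrow> (F has_real_derivative f t) (at t)"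
    and cont: "\<And>t. t > a \<Longrightarrow> isCont f t"
    and nonneg: "\<And>t. t > a \<Longrightarrow> 0 \<le> f t"
    and lim_a: "(F \<longlongrightarrow> A) (at_right a)"
    and lim_top: "(F \<longlongrightarrow> B) at_top"
  shows "(f has_integral (B - A)) {a<..}"
proof -
  have "set_integrable lborel (einterval a \<infinity>) f" "(LBINT t=ereal a..\<infinity>. f t) = B - A"
    by (rule interval_integral_FTC_nonneg[where F = F],
        auto simp: ereal_tendsto_simps intro!: deriv cont nonneg lim_a lim_top)+
  then have "set_integrable lborel {a<..} f" "(LINT t:{a<..}|lborel. f t) = B - A"
    by (simp_all add: interval_lebesgue_integral_def)
  then show ?thesis
    using set_borel_integral_eq_integral by (metis integrable_integral)
qed

lemma has_integral_one_div_sqrt_mult_plus: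
  fixes c :: real
  assumes "c > 0"
  shows "((\<lambda>t. 1 / (sqrt t * (t + c))) has_integral pi / sqrt c) {0<..}"
proof -
  define F where "F t = 2 / sqrt c * arctan (sqrt t / sqrt c)" for t
  have "((\<lambda>t. 1 / (sqrt t * (t + c))) has_integral (pi / sqrt c - 0)) {0<..}"
  proof (rule has_integral_Ioi_FTC_nonneg[where F = F])
    fix t :: real
    assume "t > 0"
    then show "(F has_real_derivative 1 / (sqrt t * (t + c))) (at t)"
      unfolding F_def using assms
      by (auto intro!: derivative_eq_intros simp: power2_eq_square divide_simps)
    show "isCont (\<lambda>t. 1 / (sqrt t * (t + c))) t" "0 \<le> 1 / (sqrt t * (t + c))"
      using \<open>t > 0\<close> assms by (auto intro!: continuous_intros)
  next
    show "(F \<longlongrightarrow> 0) (at_right 0)"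
      unfolding F_def using assms by real_asymp
    have "(F \<longlongrightarrow> pi / root 2 c) at_top"
      unfolding F_def using assms by real_asymp
    then show "(F \<longlongrightarrow> pi / sqrt c) at_top"
      by (simp add: sqrt_def)
  qed
  then show ?thesis by simp
qed

lemma has_integral_one_div_sqrt_diff:
  fixes x :: real
  assumes "x > 0"
  shows "((\<lambda>t. 1 / sqrt t - 1 / sqrt (t + x)) has_integral 2 * sqrt x) {0<..}"
proof -
  define F where "F t = 2 * sqrt t - 2 * sqrt (t + x)" for t
  have "((\<lambda>t. 1 / sqrt t - 1 / sqrt (t + x)) has_integral (0 - (- 2 * sqrt x))) {0<..}"
  proof (rule has_integral_Ioi_FTC_nonneg[where F = F])
    fix t :: real
    assume "t > 0"
    then show "(F has_real_derivative 1 / sqrt t - 1 / sqrt (t + x)) (at t)"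
      unfolding F_def using assms by (auto intro!: derivative_eq_intros simp: field_simps)
    show "isCont (\<lambda>t. 1 / sqrt t - 1 / sqrt (t + x)) t" "0 \<le> 1 / sqrt t - 1 / sqrt (t + x)"
      using \<open>t > 0\<close> assms by (auto intro!: continuous_intros simp: field_simps)
  next
    have "(F \<longlongrightarrow> - (2 * x powr (1/2))) (at_right 0)"
      unfolding F_def using assms by real_asymp
    then show "(F \<longlongrightarrow> - 2 * sqrt x) (at_right 0)"
      using assms by (simp add: powr_half_sqrt)
    show "(F \<longlongrightarrow> 0) at_top"
      unfolding F_def using assms by real_asymp
  qed
  then show ?thesis by simp
qed

lemma has_integral_sqrt_div_plus_mult_plus:
  fixes B C :: real
  assumes "B > 0" "C > 0" "B \<noteq> C"
  shows "((\<lambda>t. sqrt t / ((t + B) * (t + C))) has_integral pi / (sqrt B + sqrt C)) {0<..}"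
proof -
  have "((\<lambda>t. (C * (1 / (sqrt t * (t + C))) - B * (1 / (sqrt t * (t + B)))) / (C - B))
      has_integral (C * (pi / sqrt C) - B * (pi / sqrt B)) / (C - B)) {0<..}"
    by (intro has_integral_divide has_integral_diff has_integral_mult_right
        has_integral_one_div_sqrt_mult_plus assms)
  moreover have "(C * (pi / sqrt C) - B * (pi / sqrt B)) / (C - B) = pi / (sqrt B + sqrt C)"
  proof -
    have "C * (pi / sqrt C) - B * (pi / sqrt B) = pi * (C / sqrt C - B / sqrt B)"
      by (simp add: algebra_simps)
    also have "\<dots> = pi * (sqrt C - sqrt B)"
      using assms by (simp add: real_div_sqrt)
    finally have "C * (pi / sqrt C) - B * (pi / sqrt B) = pi * (sqrt C - sqrt B)" .
    moreover have "C - B = (sqrt C - sqrt B) * (sqrt B + sqrt C)" "sqrt C - sqrt B \<noteq> 0"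
      using assms by (auto simp: algebra_simps)
    ultimately show ?thesis
      by simp
  qed
  moreover have "(C * (1 / (sqrt t * (t + C))) - B * (1 / (sqrt t * (t + B)))) / (C - B)
      = sqrt t / ((t + B) * (t + C))" if t: "t \<in> {0<..}" for t
  proof -
    define s where "s = sqrt t"
    have "s > 0" "t = s * s"
      using t by (auto simp: s_def)
    then have "s * s + B > 0" "s * s + C > 0" "C - B \<noteq> 0"
      using assms by (auto simp: add_pos_pos)
    then show ?thesis
      unfolding s_def[symmetric] \<open>t = s * s\<close> using \<open>s > 0\<close>
      by (simp add: divide_simps) (simp add: algebra_simps)
  qed
  ultimately show ?thesis
    by (metis (no_types, lifting) has_integral_eq)
qed

lemma integral_less_if_less_on_interval:
  fixes f g :: "real \<Rightarrow> real"
  assumes "f integrable_on S" "g integrable_on S"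
    and le: "\<And>t. t \<in> S \<Longrightarrow> f t \<le> g t"
    and "{c..d} \<subseteq> S" "c < d" "continuous_on {c..d} f" "continuous_on {c..d} g"
    and less: "\<And>t. t \<in> {c<..<d} \<Longrightarrow> f t < g t"
  shows "integral S f < integral S g"
proof -
  let ?h = "\<lambda>t. g t - f t"
  have "continuous_on {c..d} ?h"
    using assms by (intro continuous_intros)
  then have "0 < integral {c..d} ?h"
    using integral_less_real[of c d "\<lambda>_. 0" ?h] less \<open>c < d\<close> by auto
  also have "\<dots> \<le> integral S ?h"
    using assms \<open>continuous_on {c..d} ?h\<close>
    by (intro integral_subset_le integrable_diff integrable_continuous_interval) auto
  also have "\<dots> = integral S g - integral S f"
    using assms by (simp add: integral_diff)
  finally show ?thesis by simp
qed

lemma carlson_RJ_eq_integral_Ioi: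
  "carlson_RJ x y z p =
     3 / 2 * integral {0<..} (\<lambda>t. 1 / (sqrt ((t + x) * (t + y) * (t + z)) * (t + p)))"
  unfolding carlson_RJ_def
  by (rule arg_cong[where f = "(*) (3 / 2)"], rule integral_spike_set)
     (auto intro: negligible_subset[of "{0}"])

lemma RJ_integrand_integrable:
  fixes x y z p :: real
  assumes "x \<ge> 0" "y > 0" "z > 0" "p > 0"
  shows "(\<lambda>t. 1 / (sqrt ((t + x) * (t + y) * (t + z)) * (t + p))) integrable_on {0<..}"
proof -
  define m where "m = min y z"
  have m: "m > 0" "m \<le> y" "m \<le> z"
    using assms by (auto simp: m_def)
  let ?I = "\<lambda>t. 1 / (sqrt ((t + x) * (t + y) * (t + z)) * (t + p))"
  let ?G = "\<lambda>t. 1 / p * (1 / (sqrt t * (t + m)))"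
  have "?G integrable_on {0<..}"
    using has_integral_mult_right[OF has_integral_one_div_sqrt_mult_plus[OF \<open>m > 0\<close>]] by blast
  moreover have "continuous_on {0<..} ?I"
    using assms by (intro continuous_intros) (auto simp: add_pos_pos)
  then have "?I \<in> borel_measurable (lebesgue_on {0<..})"
    by (rule continuous_imp_measurable_on_sets_lebesgue) simp
  moreover have "norm (?I t) \<le> ?G t" if "t \<in> {0<..}" for t
  proof -
    have "t > 0" using that by simp
    have "sqrt t * (t + m) = sqrt (t * (t + m) * (t + m))"
      using \<open>t > 0\<close> m by (simp add: real_sqrt_mult)
    also have "\<dots> \<le> sqrt ((t + x) * (t + y) * (t + z))"
      using \<open>t > 0\<close> m assms by (intro real_sqrt_le_mono mult_mono) auto
    finally have "sqrt t * (t + m) * p \<le> sqrt ((t + x) * (t + y) * (t + z)) * (t + p)"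
      using \<open>t > 0\<close> m assms by (intro mult_mono) auto
    moreover have "0 < sqrt t * (t + m) * p"
      using \<open>t > 0\<close> m assms by simp
    ultimately have "?I t \<le> 1 / (sqrt t * (t + m) * p)"
      by (intro divide_left_mono) auto
    then show ?thesis
      using \<open>t > 0\<close> assms by (simp add: ac_simps)
  qed
  ultimately have "?I absolutely_integrable_on {0<..}"
    by (intro measurable_bounded_by_integrable_imp_absolutely_integrable) auto
  then show ?thesis
    by (simp add: absolutely_integrable_on_def)
qed

lemma one_div_sqrt_diff_eq:
  fixes t x :: real
  assumes "t > 0" "x \<ge> 0"
  shows "1 / sqrt t - 1 / sqrt (t + x) = x / (sqrt t * sqrt (t + x) * (sqrt (t + x) + sqrt t))"
proof -
  define s r where "s = sqrt t" and "r = sqrt (t + x)"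
  have "s > 0" "r > 0" "x = (r - s) * (r + s)"
    using assms by (auto simp: s_def r_def algebra_simps)
  then have "x / (s * r * (r + s)) = (r - s) / (s * r)"
    by simp
  also have "\<dots> = 1 / s - 1 / r"
    using \<open>s > 0\<close> \<open>r > 0\<close> by (simp add: field_simps)
  finally show ?thesis
    unfolding s_def r_def ..
qed

lemma one_div_sqrt_diff_less:
  fixes t x :: real
  assumes "t > 0" "x > 0"
  shows "1 / sqrt t - 1 / sqrt (t + x) < x / (2 * t * sqrt t)"
proof -
  have "sqrt t < sqrt (t + x)"
    using assms by simp
  then have "sqrt t * sqrt t < sqrt t * sqrt (t + x)" "2 * sqrt t < sqrt (t + x) + sqrt t"
    using assms by (intro mult_strict_left_mono, auto)
  then have "sqrt t * sqrt t * (2 * sqrt t) < sqrt t * sqrt (t + x) * (sqrt (t + x) + sqrt t)"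
    by (rule mult_strict_mono) (use assms in auto)
  then have "2 * t * sqrt t < sqrt t * sqrt (t + x) * (sqrt (t + x) + sqrt t)"
    using assms by (simp add: ac_simps)
  then have "x / (sqrt t * sqrt (t + x) * (sqrt (t + x) + sqrt t)) < x / (2 * t * sqrt t)"
    using assms by (intro divide_strict_left_mono) auto
  then show ?thesis
    using one_div_sqrt_diff_eq[of t x] assms by simp
qed

lemma one_div_sqrt_diff_ge:
  fixes t x \<beta> :: real
  assumes "t > 0" "x \<ge> 0" "3 * x / 4 \<le> \<beta>"
  shows "x * sqrt t / (2 * (t + \<beta>)) \<le> (1 / sqrt t - 1 / sqrt (t + x)) * t"
proof -
  define s r where "s = sqrt t" and "r = sqrt (t + x)"
  have "s > 0" "r > 0" "s * s = t" "r * r = t + x"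
    using assms by (auto simp: s_def r_def)
  have "s * r \<le> t + x / 2"
  proof (rule power2_le_imp_le)
    have "(s * r)\<^sup>2 = t * (t + x)"
      using \<open>s * s = t\<close> \<open>r * r = t + x\<close> by (metis power2_eq_square mult.assoc mult.left_commute)
    then show "(s * r)\<^sup>2 \<le> (t + x / 2)\<^sup>2"
      by (simp add: power2_eq_square algebra_simps)
  qed (use assms in auto)
  then have "r * (r + s) \<le> 2 * (t + \<beta>)"
    using \<open>r * r = t + x\<close> assms(3) by (simp add: algebra_simps)
  then have "x * s / (2 * (t + \<beta>)) \<le> x * s / (r * (r + s))"
    using assms \<open>s > 0\<close> \<open>r > 0\<close> by (intro divide_left_mono) auto
  also have "\<dots> = x / (s * r * (r + s)) * t"
    using \<open>s > 0\<close> \<open>r > 0\<close> unfolding \<open>s * s = t\<close>[symmetric]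
    by (simp add: divide_simps add_pos_pos)
  finally show ?thesis
    unfolding one_div_sqrt_diff_eq[OF assms(1,2)] s_def r_def .
qed

lemma shifted_geometric_mean_bounds:
  fixes a g t Q :: real
  assumes "0 < g" "g \<le> a" "0 \<le> t" "0 < Q" and Q: "Q * Q = t * t + 2 * a * t + g * g"
  shows "t + g \<le> Q" "g / Q \<le> a / (t + a)" "1 - g / Q \<le> a / g * (t / (t + g))"
proof -
  show "t + g \<le> Q"
    by (rule power2_le_imp_le)
      (use assms mult_right_mono[OF \<open>g \<le> a\<close> \<open>0 \<le> t\<close>] in \<open>auto simp: power2_eq_square algebra_simps\<close>)
  have "(g * (t + a))\<^sup>2 \<le> (a * Q)\<^sup>2"
  proof -
    have "(a * Q)\<^sup>2 = a * a * (Q * Q)"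
      by (simp add: power2_eq_square ac_simps)
    then have "(a * Q)\<^sup>2 - (g * (t + a))\<^sup>2 = (a * a - g * g) * (t * t + 2 * a * t)"
      unfolding Q by (simp add: power2_eq_square algebra_simps)
    moreover have "0 \<le> (a * a - g * g) * (t * t + 2 * a * t)"
      using assms by (intro mult_nonneg_nonneg) (auto intro: mult_mono)
    ultimately show ?thesis by linarith
  qed
  then have "g * (t + a) \<le> a * Q"
    by (rule power2_le_imp_le) (use assms in auto)
  then show "g / Q \<le> a / (t + a)"
    using assms by (simp add: divide_simps)
  have "1 - g / Q = t * (t + 2 * a) / (Q * (Q + g))"
    using assms by (simp add: divide_simps) (simp add: algebra_simps)
  also have "\<dots> \<le> t * (t + 2 * a) / ((t + g) * (t + 2 * g))"
    using \<open>t + g \<le> Q\<close> assms by (intro divide_left_mono mult_mono mult_pos_pos) auto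
  also have "\<dots> \<le> a / g * (t / (t + g))"
    using assms mult_right_mono[OF \<open>g \<le> a\<close>, of "t * t"]
    by (simp add: divide_simps) (simp add: algebra_simps)
  finally show "1 - g / Q \<le> a / g * (t / (t + g))" .
qed

definition RJ_weight :: "real \<Rightarrow> real \<Rightarrow> real \<Rightarrow> real \<Rightarrow> real" where
  "RJ_weight y z p t = 1 - sqrt (y * z) / sqrt ((t + y) * (t + z)) * (p / (t + p))"

lemma RJ_weight_bounds:
  fixes y z p t :: real
  assumes "t > 0" "y > 0" "z > 0" "p > 0"
  defines "a \<equiv> (y + z) / 2" and "g \<equiv> sqrt (y * z)"
  shows "t / (t + a) \<le> RJ_weight y z p t"
    and "RJ_weight y z p t \<le> (a / g + g / p) * (t / (t + g))"
proof -
  define Q where "Q = sqrt ((t + y) * (t + z))"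
  have "g > 0" "Q > 0"
    using assms by (auto simp: g_def Q_def)
  have "g \<le> a"
    using arith_geo_mean_sqrt[of y z] assms by (simp add: a_def g_def)
  have "Q * Q = t * t + 2 * a * t + g * g"
    using assms by (simp add: Q_def a_def g_def algebra_simps)
  note Q_bounds = shifted_geometric_mean_bounds[OF \<open>g > 0\<close> \<open>g \<le> a\<close> _ \<open>Q > 0\<close> this]
  have w: "RJ_weight y z p t = 1 - g / Q * (p / (t + p))"
    by (simp add: RJ_weight_def g_def Q_def)
  have "g / Q * (p / (t + p)) \<le> g / Q"
    using \<open>t > 0\<close> \<open>p > 0\<close> \<open>g > 0\<close> \<open>Q > 0\<close> by (intro mult_left_le) auto
  also have "\<dots> \<le> a / (t + a)"
    using Q_bounds \<open>t > 0\<close> by simp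
  also have "\<dots> = 1 - t / (t + a)"
    using \<open>t > 0\<close> \<open>g > 0\<close> \<open>g \<le> a\<close> by (simp add: field_simps)
  finally show "t / (t + a) \<le> RJ_weight y z p t"
    unfolding w by simp
  have "g / Q \<le> g / (t + g)"
    using Q_bounds \<open>g > 0\<close> \<open>t > 0\<close> by (intro divide_left_mono) auto
  moreover have "1 - p / (t + p) \<le> t / p"
    using \<open>t > 0\<close> \<open>p > 0\<close> by (simp add: field_simps)
  ultimately have "g / Q * (1 - p / (t + p)) \<le> g / (t + g) * (t / p)"
    using \<open>t > 0\<close> \<open>p > 0\<close> \<open>g > 0\<close> by (intro mult_mono) (auto simp: field_simps)
  also have "\<dots> = g / p * (t / (t + g))"
    by simp
  finally have "RJ_weight y z p t \<le> a / g * (t / (t + g)) + g / p * (t / (t + g))"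
    using Q_bounds \<open>t > 0\<close> unfolding w by (simp add: algebra_simps)
  then show "RJ_weight y z p t \<le> (a / g + g / p) * (t / (t + g))"
    by (simp only: distrib_right)
qed

lemma has_integral_RJ_weighted:
  fixes x y z p :: real
  assumes "x > 0" "y > 0" "z > 0" "p > 0"
  defines "g \<equiv> sqrt (y * z)"
  shows "((\<lambda>t. (1 / sqrt t - 1 / sqrt (t + x)) * RJ_weight y z p t) has_integral
           2 * sqrt x + 2 / 3 * g * p * (carlson_RJ x y z p - carlson_RJ 0 y z p)) {0<..}"
proof -
  define I where "I c t = 1 / (sqrt ((t + c) * (t + y) * (t + z)) * (t + p))" for c t
  define J where "J c = integral {0<..} (I c)" for c
  have RJ: "carlson_RJ c y z p = 3 / 2 * J c" for c
    unfolding J_def I_def by (rule carlson_RJ_eq_integral_Ioi)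
  have "(I c has_integral J c) {0<..}" if "c \<ge> 0" for c
    using RJ_integrand_integrable[OF that assms(2-4)] unfolding I_def J_def
    by (simp add: integrable_integral)
  then have "((\<lambda>t. (1 / sqrt t - 1 / sqrt (t + x)) - g * p * (I 0 t - I x t)) has_integral
      2 * sqrt x - g * p * (J 0 - J x)) {0<..}"
    using assms(1)
    by (intro has_integral_diff has_integral_mult_right has_integral_one_div_sqrt_diff) auto
  moreover have "2 * sqrt x - g * p * (J 0 - J x) =
      2 * sqrt x + 2 / 3 * g * p * (carlson_RJ x y z p - carlson_RJ 0 y z p)"
    unfolding RJ by (simp add: algebra_simps)
  moreover have "(1 / sqrt t - 1 / sqrt (t + x)) - g * p * (I 0 t - I x t) =
      (1 / sqrt t - 1 / sqrt (t + x)) * RJ_weight y z p t" if "t \<in> {0<..}" for t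
  proof -
    define Q where "Q = sqrt ((t + y) * (t + z))"
    have "t > 0" "Q > 0"
      using that assms by (auto simp: Q_def)
    have "I c t = 1 / (sqrt (t + c) * Q * (t + p))" for c
      unfolding I_def Q_def by (simp add: real_sqrt_mult mult.assoc)
    then have "I 0 t - I x t = 1 / (sqrt t * Q * (t + p)) - 1 / (sqrt (t + x) * Q * (t + p))"
      by simp
    also have "\<dots> = (1 / sqrt t - 1 / sqrt (t + x)) / (Q * (t + p))"
      by (simp add: diff_divide_distrib mult.assoc)
    finally have I_diff: "I 0 t - I x t = (1 / sqrt t - 1 / sqrt (t + x)) / (Q * (t + p))" .
    have "F - g * p * (F / (Q * (t + p))) = F * (1 - g / Q * (p / (t + p)))" for F
      using \<open>t > 0\<close> \<open>Q > 0\<close> assms(4) by (simp add: field_simps)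
    then show ?thesis
      unfolding I_diff RJ_weight_def g_def[symmetric] Q_def[symmetric] .
  qed
  ultimately show ?thesis
    by (metis (no_types, lifting) has_integral_eq)
qed

lemma RJ_weighted_integral_gt:
  fixes x y z p D :: real
  assumes "x > 0" "y > 0" "z > 0" "p > 0"
    and D: "((\<lambda>t. (1 / sqrt t - 1 / sqrt (t + x)) * RJ_weight y z p t) has_integral D) {0<..}"
  defines "a \<equiv> (y + z) / 2"
  shows "pi * x / (2 * (sqrt a + sqrt x)) < D"
proof -
  have "a > 0"
    using assms(2,3) by (simp add: a_def)
  \<comment> \<open>\<open>\<beta> < x\<close> makes the bound strict; \<open>\<beta> \<noteq> a\<close> only keeps the partial fractions below valid\<close>
  obtain \<beta> where \<beta>: "3 * x / 4 \<le> \<beta>" "\<beta> < x" "\<beta> \<noteq> a"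
  proof (cases "a = 3 * x / 4")
    case True
    then show ?thesis using that[of "7 * x / 8"] assms(1) by auto
  next
    case False
    then show ?thesis using that[of "3 * x / 4"] assms(1) by auto
  qed
  have "\<beta> > 0"
    using \<beta>(1) assms(1) by linarith
  let ?L = "\<lambda>t. x / 2 * (sqrt t / ((t + \<beta>) * (t + a)))"
  have L: "(?L has_integral x / 2 * (pi / (sqrt \<beta> + sqrt a))) {0<..}"
    using \<open>\<beta> > 0\<close> \<open>a > 0\<close> \<beta>(3)
    by (intro has_integral_mult_right has_integral_sqrt_div_plus_mult_plus)
  have "?L t \<le> (1 / sqrt t - 1 / sqrt (t + x)) * RJ_weight y z p t" if "t \<in> {0<..}" for t
  proof -
    have "t > 0"
      using that by simp
    have "?L t = x * sqrt t / (2 * (t + \<beta>)) / (t + a)"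
      by simp
    also have "\<dots> \<le> (1 / sqrt t - 1 / sqrt (t + x)) * t / (t + a)"
      using one_div_sqrt_diff_ge[OF \<open>t > 0\<close> _ \<beta>(1)] \<open>t > 0\<close> \<open>a > 0\<close> assms(1)
      by (intro divide_right_mono) auto
    also have "\<dots> \<le> (1 / sqrt t - 1 / sqrt (t + x)) * RJ_weight y z p t"
      using RJ_weight_bounds(1)[OF \<open>t > 0\<close> assms(2-4)] \<open>t > 0\<close> assms(1)
      unfolding a_def times_divide_eq_right[symmetric]
      by (intro mult_left_mono) (auto simp: divide_simps)
    finally show ?thesis .
  qed
  then have "x / 2 * (pi / (sqrt \<beta> + sqrt a)) \<le> D"
    using has_integral_le[OF L D] by blast
  moreover have "sqrt \<beta> + sqrt a < sqrt a + sqrt x"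
    using \<beta>(2) by simp
  then have "pi * x / (2 * (sqrt a + sqrt x)) < x / 2 * (pi / (sqrt \<beta> + sqrt a))"
    using \<open>\<beta> > 0\<close> \<open>a > 0\<close> assms(1)
    by (simp add: divide_simps add_pos_pos)
  ultimately show ?thesis
    by linarith
qed

lemma RJ_weighted_integral_lt:
  fixes x y z p D :: real
  assumes "x > 0" "y > 0" "z > 0" "p > 0"
    and D: "((\<lambda>t. (1 / sqrt t - 1 / sqrt (t + x)) * RJ_weight y z p t) has_integral D) {0<..}"
  defines "a \<equiv> (y + z) / 2" and "g \<equiv> sqrt (y * z)"
  shows "D < (a / g + g / p) * pi * x / (2 * sqrt g)"
proof -
  let ?f = "\<lambda>t. (1 / sqrt t - 1 / sqrt (t + x)) * RJ_weight y z p t"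
  let ?U = "\<lambda>t. (a / g + g / p) * (x / 2) * (1 / (sqrt t * (t + g)))"
  have "g > 0" "a > 0"
    using assms(2,3) by (simp_all add: a_def g_def)
  have U: "(?U has_integral (a / g + g / p) * (x / 2) * (pi / sqrt g)) {0<..}"
    using \<open>g > 0\<close> by (intro has_integral_mult_right has_integral_one_div_sqrt_mult_plus)
  have "?f t < ?U t" if "t > 0" for t
  proof -
    note w = RJ_weight_bounds[OF that assms(2-4), folded a_def g_def]
    have "0 < t / (t + a)"
      using that \<open>a > 0\<close> by simp
    then have "0 < RJ_weight y z p t"
      using w(1) by linarith
    then have "?f t < x / (2 * t * sqrt t) * RJ_weight y z p t"
      using one_div_sqrt_diff_less[OF that assms(1)] by (intro mult_strict_right_mono)
    also have "\<dots> \<le> x / (2 * t * sqrt t) * ((a / g + g / p) * (t / (t + g)))"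
      using w(2) that assms(1) by (intro mult_left_mono) auto
    also have "\<dots> = ?U t"
      using that \<open>g > 0\<close> by (simp add: divide_simps add_pos_pos)
    finally show ?thesis .
  qed
  moreover have "continuous_on {1..2} ?f" "continuous_on {1..2} ?U"
    unfolding RJ_weight_def using assms(1-4) \<open>g > 0\<close>
    by (auto intro!: continuous_intros simp: add_pos_pos)
  ultimately have "integral {0<..} ?f < integral {0<..} ?U"
    using D U by (intro integral_less_if_less_on_interval[where c = 1 and d = 2])
      (auto simp: has_integral_integrable_integral less_imp_le)
  then show ?thesis
    using D U by (simp add: integral_unique mult_ac)
qed

lemma RJ_weighted_integral_theta_bounds:
  fixes x y z p D :: real
  assumes "x > 0" "y > 0" "z > 0" "p > 0"
    and D: "((\<lambda>t. (1 / sqrt t - 1 / sqrt (t + x)) * RJ_weight y z p t) has_integral D) {0<..}"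
  defines "a \<equiv> (y + z) / 2" and "g \<equiv> sqrt (y * z)"
  shows "sqrt (g / a) / (1 + sqrt (x / a)) < 2 * sqrt g * D / (pi * x)"
    and "2 * sqrt g * D / (pi * x) < a / g + g / p"
proof -
  have "g > 0" "a > 0"
    using assms(2,3) by (simp_all add: a_def g_def)
  then have c: "0 < 2 * sqrt g / (pi * x)"
    using \<open>x > 0\<close> by simp
  have "sqrt (g / a) / (1 + sqrt (x / a)) = 2 * sqrt g / (pi * x) * (pi * x / (2 * (sqrt a + sqrt x)))"
    using \<open>x > 0\<close> \<open>a > 0\<close> by (simp add: real_sqrt_divide divide_simps add_pos_pos)
  also have "\<dots> < 2 * sqrt g / (pi * x) * D"
    using RJ_weighted_integral_gt[OF assms(1-5), folded a_def] c by (rule mult_strict_left_mono)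
  finally show "sqrt (g / a) / (1 + sqrt (x / a)) < 2 * sqrt g * D / (pi * x)"
    by simp
  have "2 * sqrt g / (pi * x) * D < 2 * sqrt g / (pi * x) * ((a / g + g / p) * pi * x / (2 * sqrt g))"
    using RJ_weighted_integral_lt[OF assms(1-5), folded a_def g_def] c by (rule mult_strict_left_mono)
  then show "2 * sqrt g * D / (pi * x) < a / g + g / p"
    using \<open>x > 0\<close> \<open>g > 0\<close> by simp
qed

theorem mainTheorem14:
  fixes x y z p :: real
  assumes "x \<ge> 0" and "y > 0" and "z > 0" and "p > 0"
  defines "a \<equiv> (y + z) / 2" and "g \<equiv> sqrt (y * z)"
  shows "\<exists>\<theta>. sqrt (g / a) / (1 + sqrt (x / a)) < \<theta> \<and> \<theta> < a / g + g / p \<and>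
           carlson_RJ x y z p =
             carlson_RJ 0 y z p + 3 * sqrt x / (g * p) * (-1 + pi * \<theta> / 4 * sqrt (x / g))"
proof (cases "x = 0")
  case True
  have "sqrt (g / a) \<le> 1" "1 \<le> a / g" "0 < g / p"
    using assms(2-4) arith_geo_mean_sqrt[of y z] by (auto simp: a_def g_def)
  then have "sqrt (g / a) < a / g + g / p"
    by linarith
  then obtain \<theta> where "sqrt (g / a) < \<theta>" "\<theta> < a / g + g / p"
    using dense by blast
  then show ?thesis
    using True by auto
next
  case False
  then have "x > 0"
    using assms(1) by simp
  obtain r where "r > 0" "x = r * r" "sqrt x = r"
    using \<open>x > 0\<close> by (metis real_sqrt_gt_0_iff real_sqrt_mult_self abs_of_pos)
  have "g > 0"
    using assms(2,3) by (simp add: g_def)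
  define D where "D = 2 * sqrt x + 2 / 3 * g * p * (carlson_RJ x y z p - carlson_RJ 0 y z p)"
  note D_int = has_integral_RJ_weighted[OF \<open>x > 0\<close> assms(2-4), folded g_def, folded D_def]
  define \<theta> where "\<theta> = 2 * sqrt g * D / (pi * x)"
  have "pi * \<theta> / 4 * sqrt (x / g) = D / (2 * sqrt x)"
    using \<open>r > 0\<close> \<open>x = r * r\<close> \<open>sqrt x = r\<close> \<open>g > 0\<close>
    by (simp add: \<theta>_def real_sqrt_divide field_simps)
  then have "carlson_RJ x y z p =
      carlson_RJ 0 y z p + 3 * sqrt x / (g * p) * (-1 + pi * \<theta> / 4 * sqrt (x / g))"
    using \<open>x > 0\<close> \<open>g > 0\<close> assms(4) by (simp add: D_def field_simps)
  then show ?thesis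
    using RJ_weighted_integral_theta_bounds[OF \<open>x > 0\<close> assms(2-4) D_int, folded a_def g_def]
    unfolding \<theta>_def by blast
qed

end
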